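(* Fix $p$ and $q$, and let $\widetilde{\mathrm{gr}}$ refer to the absolute $\mathbb{Q}$-grading on $\widehat{HF}(-L(p,q))$. For $0\leq i<p$, $$\widetilde{\mathrm{gr}}(x_{i+q\!\!\mod {p}}) - \widetilde{\mathrm{gr}}(x_i)={1\over p}(p-1-2i).$$
   Context: $p>q$ are relatively prime positive integers. $-L(p,q)$ has the pointed Heegaard diagram with $\Sigma$ the torus $[0,1]\times[0,1]$ with edges identified, $\alpha$ the horizontal circle $y=1/2$, $\beta$ a circle of slope $-p/q$, and $z$ a point below $y=1/2$. The $p$ points of $\alpha\cap\beta$ are labeled $x_0,\ldots,x_{p-1}$ from left to right along $\alpha$, where $x_0$ is the upper right vertex of the region containing $z$ (regions $D_0,\dots,D_{p-1}$ labeled left to right with $z\in D_0$). Each $x_i$ is in a distinct $\mathrm{Spin}^c$ structure and $\widehat{CF}=\widehat{HF}(-L(p,q))$. $\widetilde{\mathrm{gr}}$ is Ozsváth–Szabó's absolute $\mathbb{Q}$-grading, which satisfies, for $0\le i<p+q$, $\widetilde{\mathrm{gr}}_{p,q}(x_{i \bmod p})=\frac{pq-(2i+1-p-q)^2}{4pq}-\widetilde{\mathrm{gr}}_{q,p\bmod q}(x_{i\bmod q})$. *)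

theory Defs
  imports Complex_Main
begin

text \<open>Absolute Q-grading of the generator x_i of HF-hat(-L(p,q)), 0 <= i < p,
  determined by the Ozsvath--Szabo recursion
  gr_{p,q}(x_i) = (pq - (2i+1-p-q)^2)/(4pq) - gr_{q, p mod q}(x_{i mod q}),
  with base case L(1,0) = S^3 whose unique generator has grading 0.\<close>
function gr :: "nat \<Rightarrow> nat \<Rightarrow> nat \<Rightarrow> rat" where
  "gr p q i = (if q = 0 then 0 else
     of_int (int p * int q - (2 * int i + 1 - int p - int q)^2) / of_int (4 * int p * int q)
     - gr q (p mod q) (i mod q))"
  by auto
termination by (relation "measure (\<lambda>(p, q, i). q)") auto

end

theory Submission
  imports Defs
begin

text \<open>Induction along the Euclidean algorithm. Adding q to the index either stays
  below p, and then the recursive terms for (q, p mod q) coincide, so only the explicit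
  quadratic term contributes; or it wraps around to m = i + q - p < q, and then the recursive
  terms form exactly the difference of the corollary for the pair (q, p mod q) at index m,
  known by induction.\<close>

definition gr_quadratic :: "nat \<Rightarrow> nat \<Rightarrow> int \<Rightarrow> rat" where
  "gr_quadratic p q k =
     of_int (int p * int q - (2 * k + 1 - int p - int q)^2) / of_int (4 * int p * int q)"

lemma gr_recursion:
  assumes "0 < q"
  shows "gr p q i = gr_quadratic p q (int i) - gr q (p mod q) (i mod q)"
  using assms by (subst gr.simps) (simp add: gr_quadratic_def)

lemma gr_base: "gr p 0 i = 0"
  by (subst gr.simps) simp

lemma gr_quadratic_diff:
  "gr_quadratic p q (k + d) - gr_quadratic p q k
     = - of_int (d * (2 * k + d + 1 - int p - int q)) / of_int (int p * int q)"
proof -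
  have "(int p * int q - (2 * (k + d) + 1 - int p - int q)^2)
          - (int p * int q - (2 * k + 1 - int p - int q)^2)
        = 4 * (- (d * (2 * k + d + 1 - int p - int q)))"
    by (simp add: algebra_simps power2_eq_square)
  then have "gr_quadratic p q (k + d) - gr_quadratic p q k
      = of_int (4 * (- (d * (2 * k + d + 1 - int p - int q)))) / of_int (4 * (int p * int q))"
    unfolding gr_quadratic_def diff_divide_distrib [symmetric] of_int_diff [symmetric]
    by (simp only: mult.assoc)
  also have "\<dots> = - of_int (d * (2 * k + d + 1 - int p - int q)) / of_int (int p * int q)"
    by (simp only: of_int_mult of_int_numeral mult_divide_mult_cancel_left_if) simp
  finally show ?thesis .
qed

lemma gr_quadratic_shift:
  assumes "0 < q"
  shows "gr_quadratic p q (k + int q) - gr_quadratic p q k = of_int (int p - 1 - 2 * k) / of_nat p"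
proof -
  have "int q * (2 * k + int q + 1 - int p - int q) = int q * - (int p - 1 - 2 * k)"
    by (simp add: algebra_simps)
  then have "gr_quadratic p q (k + int q) - gr_quadratic p q k
      = - of_int (int q * - (int p - 1 - 2 * k)) / of_int (int q * int p)"
    by (simp add: gr_quadratic_diff mult.commute)
  also have "\<dots> = of_int (int p - 1 - 2 * k) / of_nat p"
    using assms by (simp only: of_int_mult mult_divide_mult_cancel_left_if) (simp add: minus_divide_left)
  finally show ?thesis .
qed

lemma gr_quadratic_wrap:
  assumes "0 < p" "0 < q"
  shows "gr_quadratic p q (k + (int q - int p)) - gr_quadratic p q k
           + of_int (int q - 1 - 2 * (k + (int q - int p))) / of_nat q
         = of_int (int p - 1 - 2 * k) / of_nat p"
proof -
  let ?d = "int q - int p"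
  let ?W = "int q - 1 - 2 * (k + ?d)"
  have over_pq: "(of_int x / of_nat n :: rat) = of_int (int m * x) / of_int (int m * int n)"
    if "0 < m" for x :: int and m n :: nat
    using that by (simp add: mult_divide_mult_cancel_left)
  have "- (?d * (2 * k + ?d + 1 - int p - int q)) + int p * ?W = int q * (int p - 1 - 2 * k)"
    by (simp add: algebra_simps)
  then have "- of_int (?d * (2 * k + ?d + 1 - int p - int q)) / of_int (int p * int q)
      + of_int (int p * ?W) / of_int (int p * int q)
      = (of_int (int q * (int p - 1 - 2 * k)) / of_int (int q * int p) :: rat)"
    by (simp only: add_divide_distrib [symmetric] mult.commute [of "int q" "int p"])
       (metis of_int_add of_int_minus)
  then show ?thesis
    using over_pq [OF assms(1), of ?W q] over_pq [OF assms(2), of "int p - 1 - 2 * k" p]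
    by (simp add: gr_quadratic_diff)
qed

lemma gr_shift_within_range:
  assumes "0 < q" and "i + q < p"
  shows "gr p q (i + q) - gr p q i = of_int (int p - 1 - 2 * int i) / of_nat p"
proof -
  have "gr p q (i + q) - gr p q i = gr_quadratic p q (int i + int q) - gr_quadratic p q (int i)"
    using gr_recursion [OF assms(1), of p "i + q"] gr_recursion [OF assms(1), of p i] by simp
  also have "\<dots> = of_int (int p - 1 - 2 * int i) / of_nat p"
    using gr_quadratic_shift [OF assms(1)] by simp
  finally show ?thesis .
qed

lemma gr_shift_index:
  assumes "q < p" and "coprime p q" and "i < p"
  shows "gr p q ((i + q) mod p) - gr p q i = of_int (int p - 1 - 2 * int i) / of_nat p"
  using assms
proof (induction q arbitrary: p i rule: less_induct)
  case (less q)
  consider "q = 0" | "0 < q" "i + q < p" | "0 < q" "p \<le> i + q"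
    by linarith
  then show ?case
  proof cases
    case 1
    with less.prems have "p = 1"
      by simp
    with 1 show ?thesis
      using less.prems by (simp add: gr_base)
  next
    case 2
    then show ?thesis
      using gr_shift_within_range by simp
  next
    case 3
    define m where "m = i + q - p"
    have "m < q" and m_eq: "int m = int i + (int q - int p)"
      using 3 less.prems unfolding m_def by auto
    have wrap: "(i + q) mod p = m"
      using 3 less.prems unfolding m_def by (simp add: mod_if)
    have "i mod q = (i + q) mod q"
      by simp
    also have "\<dots> = (m + p) mod q"
      using 3 unfolding m_def by simp
    finally have i_mod: "i mod q = (m + p mod q) mod q"
      by (simp add: mod_add_right_eq)
    have "coprime q (p mod q)"
      using less.prems(2) 3(1) by (simp add: ac_simps)
    with \<open>m < q\<close> have IH: "gr q (p mod q) ((m + p mod q) mod q) - gr q (p mod q) m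
        = of_int (int q - 1 - 2 * int m) / of_nat q"
      using less.IH [of "p mod q" q m] 3(1) by simp
    have "gr p q ((i + q) mod p) - gr p q i
        = gr_quadratic p q (int m) - gr_quadratic p q (int i)
          + (gr q (p mod q) ((m + p mod q) mod q) - gr q (p mod q) m)"
      using gr_recursion [OF 3(1), of p m] gr_recursion [OF 3(1), of p i] \<open>m < q\<close>
      unfolding wrap i_mod by simp
    also have "\<dots> = of_int (int p - 1 - 2 * int i) / of_nat p"
      using gr_quadratic_wrap [of p q "int i"] 3(1) less.prems(1)
      unfolding IH m_eq by simp
    finally show ?thesis .
  qed
qed

theorem corollary5p2:
  fixes p q i :: nat
  assumes "0 < q" and "q < p" and "coprime p q" and "i < p"
  shows "gr p q ((i + q) mod p) - gr p q i = (of_int (int p - 1 - 2 * int i)) / of_nat p"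
  using assms(2-4) by (rule gr_shift_index)

end
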